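(* Let $E$ be a countable set, $\Omega=[0,1]^E$ with its Borel $\sigma$-field $\mathcal F$ and the product $\mathbb P$ of uniform measures. Let $\mathcal A,\mathcal B\in\mathcal F$, $a,b\in(0,1)$, $s\in\mathbb N$, and let $\Phi:\mathcal A\to\mathcal B$ be measurable. Suppose that for every $\omega'\in\Phi(\mathcal A)$ there is a set $S=S(\omega')\subset E$ with at most $s$ elements such that $$\Phi^{-1}(\omega')\subset\{\omega:\omega|_{S^c}=\omega'|_{S^c}\}\cap\bigcup_{L\subset S}\Big(\{\omega:\omega|_L=\tfrac1a\,\omega'|_L\}\cap\{\omega:\omega|_{S\setminus L}=\tfrac{\omega'-b}{1-b}\big|_{S\setminus L}\}\Big).$$ Then $\mathbb P[\mathcal A]\le\Big(\frac{2}{a\wedge(1-b)}\Big)^s\mathbb P[\mathcal B]$.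
   Context: For $\omega\in[0,1]^E$ and $S\subset E$, $\omega|_S$ denotes the restriction of $\omega$ to $S$; arithmetic operations on restrictions act coordinatewise. *)

theory Defs
  imports "HOL-Probability.Probability"
begin

definition unit_interval_measure :: "real measure" where
  "unit_interval_measure = restrict_space lborel {0..1}"

text \<open>The product probability space Omega = [0,1]^E with the product of uniform
measures. For countable E the product sigma-field equals the Borel sigma-field
of the product topology.\<close>
definition cube_measure :: "'e set \<Rightarrow> ('e \<Rightarrow> real) measure" where
  "cube_measure E = PiM E (\<lambda>_. unit_interval_measure)"

end

theory Submission
  imports Defs
begin

text \<open>Every branch \<open>\<omega>' \<mapsto> \<omega>\<close> of the fibre condition inverts an affine map \<open>T\<close> of the
cube that contracts at most \<open>s\<close> coordinates, each by the factor \<open>a\<close> or \<open>1 - b\<close>; integrating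
one coordinate at a time gives \<open>P D \<le> (1 / min a (1 - b))\<^sup>s P (T ` D)\<close> for measurable \<open>D\<close>.
As \<open>E\<close> is countable there are only countably many branches \<open>(S, L)\<close>, so \<open>A\<close> splits into
countably many disjoint measurable pieces, on each of which \<open>\<Phi>\<close> is such a map \<open>T\<close>. The
images of the pieces lie in \<open>B\<close>, and every point of \<open>B\<close> lies in at most \<open>2\<^sup>s\<close> of them,
because its fibre has at most one point for each \<open>L \<subseteq> S\<close>.\<close>

lemma space_unit_interval_measure: "space unit_interval_measure = {0..1}"
  unfolding unit_interval_measure_def by (simp add: space_restrict_space)

lemma prob_space_unit_interval_measure: "prob_space unit_interval_measure"
  unfolding unit_interval_measure_def
  by (rule prob_spaceI) (simp add: emeasure_restrict_space space_restrict_space)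

lemma measurable_unit_interval_measure_iff:
  "f \<in> measurable M unit_interval_measure \<longleftrightarrow>
     f \<in> borel_measurable M \<and> f \<in> space M \<rightarrow> {0..1}"
  unfolding unit_interval_measure_def
  by (auto simp: measurable_restrict_space2_iff)

lemma nn_integral_unit_interval_affine_le:
  fixes h :: "real \<Rightarrow> ennreal"
  assumes h: "h \<in> borel_measurable unit_interval_measure"
    and p: "0 \<le> p" and c: "0 < c" "p + c \<le> 1"
  shows "(\<integral>\<^sup>+x. h (p + c * x) \<partial>unit_interval_measure)
           \<le> ennreal (1 / c) * (\<integral>\<^sup>+x. h x \<partial>unit_interval_measure)"
proof -
  have clamp: "(\<lambda>x::real. max 0 (min 1 x)) \<in> measurable borel unit_interval_measure"
    by (auto simp: measurable_unit_interval_measure_iff)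
  define F where "F y = h (max 0 (min 1 y)) * indicator {0..1::real} ((y - p) / c)" for y
  have F[measurable]: "F \<in> borel_measurable borel"
    unfolding F_def using measurable_compose[OF clamp h] by measurable
  have affine_in_unit: "p + c * x \<in> {0..1}" if "x \<in> {0..1}" for x
  proof -
    have "0 \<le> c * x" "c * x \<le> c" using that c by (simp_all add: mult_left_le)
    with p c(2) show ?thesis by (simp only: atLeastAtMost_iff) linarith
  qed
  have "(\<integral>\<^sup>+x. h (p + c * x) \<partial>unit_interval_measure)
      = (\<integral>\<^sup>+x. h (p + c * x) * indicator {0..1} x \<partial>lborel)"
    unfolding unit_interval_measure_def by (rule nn_integral_restrict_space) simp
  also have "\<dots> = (\<integral>\<^sup>+x. F (p + c * x) \<partial>lborel)"
    using c affine_in_unit by (intro nn_integral_cong) (auto simp: F_def indicator_def)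
  also have "\<dots> = ennreal (1 / c) * (\<integral>\<^sup>+y. F y \<partial>lborel)"
    using nn_integral_real_affine[OF F, of c p] c
    by (simp add: ennreal_mult[symmetric] mult.assoc[symmetric])
  also have "(\<integral>\<^sup>+y. F y \<partial>lborel) \<le> (\<integral>\<^sup>+y. h y * indicator {0..1} y \<partial>lborel)"
  proof (rule nn_integral_mono)
    fix y :: real
    have "(y - p) / c \<in> {0..1} \<Longrightarrow> y \<in> {0..1}"
      using p c by (auto simp: divide_simps)
    then show "F y \<le> h y * indicator {0..1} y"
      by (auto simp: F_def indicator_def)
  qed
  also have "\<dots> = (\<integral>\<^sup>+y. h y \<partial>unit_interval_measure)"
    unfolding unit_interval_measure_def by (rule nn_integral_restrict_space[symmetric]) simp
  finally show ?thesis
    by (simp add: mult_left_mono)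
qed

lemma space_cube_measure: "space (cube_measure E) = (\<Pi>\<^sub>E i\<in>E. {0..1})"
  unfolding cube_measure_def by (simp add: space_PiM space_unit_interval_measure)

lemma prob_space_cube_measure: "prob_space (cube_measure E)"
  unfolding cube_measure_def by (intro prob_space_PiM prob_space_unit_interval_measure)

lemma measurable_cube_component[measurable]:
  "(\<lambda>w. w i) \<in> borel_measurable (cube_measure E)"
proof (cases "i \<in> E")
  case True
  have "(\<lambda>x. x) \<in> borel_measurable unit_interval_measure"
    unfolding unit_interval_measure_def by (simp add: measurable_restrict_space1)
  from measurable_compose[OF measurable_component_singleton[OF True] this]
  show ?thesis unfolding cube_measure_def by simp
next
  case False
  then have "w i = undefined" if "w \<in> space (cube_measure E)" for w
    using that by (auto simp: space_cube_measure PiE_def extensional_def)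
  then show ?thesis
    by (subst measurable_cong[where g = "\<lambda>_. undefined"]) auto
qed

lemma measurable_into_cube_measure:
  assumes "\<And>i. i \<in> E \<Longrightarrow> (\<lambda>w. f w i) \<in> borel_measurable M"
    and "\<And>w i. w \<in> space M \<Longrightarrow> i \<in> E \<Longrightarrow> f w i \<in> {0..1}"
  shows "(\<lambda>w. restrict (f w) E) \<in> measurable M (cube_measure E)"
  unfolding cube_measure_def
proof (rule measurable_restrict)
  fix i assume "i \<in> E"
  with assms show "(\<lambda>w. f w i) \<in> measurable M unit_interval_measure"
    by (simp add: measurable_unit_interval_measure_iff Pi_iff)
qed

lemma measurable_cube_measure_update:
  assumes e: "e \<in> E"
  shows "(\<lambda>(x, X). X(e := x)) \<in> measurable
           (unit_interval_measure \<Otimes>\<^sub>M cube_measure (E - {e})) (cube_measure E)"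
proof -
  let ?N = "unit_interval_measure \<Otimes>\<^sub>M cube_measure (E - {e})"
  have "(\<lambda>z. restrict (\<lambda>i. if i = e then fst z else snd z i) E) \<in> measurable ?N (cube_measure E)"
  proof (rule measurable_into_cube_measure)
    fix i
    have "fst \<in> borel_measurable ?N"
      using measurable_fst measurable_unit_interval_measure_iff by blast
    moreover have "(\<lambda>z. snd z i) \<in> borel_measurable ?N"
      by (rule measurable_compose[OF measurable_snd measurable_cube_component])
    ultimately show "(\<lambda>z. if i = e then fst z else snd z i) \<in> borel_measurable ?N"
      by (cases "i = e") (simp_all only: if_True if_False simp_thms)
    fix z assume "z \<in> space ?N" "i \<in> E"
    then have "fst z \<in> {0..1}" "snd z i \<in> {0..1} \<or> i = e"
      unfolding space_pair_measure space_cube_measure space_unit_interval_measure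
      by (simp_all add: mem_Times_iff PiE_iff) blast
    then show "(if i = e then fst z else snd z i) \<in> {0..1}"
      by auto
  qed
  moreover have "restrict (\<lambda>i. if i = e then fst z else snd z i) E = (case z of (x, X) \<Rightarrow> X(e := x))"
    if "z \<in> space ?N" for z
    using that e by (auto simp: space_pair_measure space_cube_measure PiE_def extensional_def)
  ultimately show ?thesis
    by (rule measurable_cong[THEN iffD1, rotated])
qed

lemma nn_integral_cube_measure_split:
  fixes f :: "('e \<Rightarrow> real) \<Rightarrow> ennreal"
  assumes e: "e \<in> E" and f: "f \<in> borel_measurable (cube_measure E)"
  shows "(\<integral>\<^sup>+w. f w \<partial>cube_measure E)
           = (\<integral>\<^sup>+X. (\<integral>\<^sup>+x. f (X(e := x)) \<partial>unit_interval_measure) \<partial>cube_measure (E - {e}))"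
    and "(\<lambda>X. \<integral>\<^sup>+x. f (X(e := x)) \<partial>unit_interval_measure) \<in> borel_measurable (cube_measure (E - {e}))"
proof -
  let ?U = unit_interval_measure and ?P' = "cube_measure (E - {e})"
  interpret U: prob_space ?U by (rule prob_space_unit_interval_measure)
  interpret UP: pair_sigma_finite ?U ?P'
    by (intro pair_sigma_finite.intro U.sigma_finite_measure_axioms
        prob_space_imp_sigma_finite prob_space_cube_measure)
  let ?upd = "\<lambda>(x, X). X(e := x)"
  note upd = measurable_cube_measure_update[OF e]
  have distr_upd: "distr (?U \<Otimes>\<^sub>M ?P') (cube_measure E) ?upd = cube_measure E"
    using distr_pair_PiM_eq_PiM[of "E - {e}" "\<lambda>_. ?U" e] e
    by (simp add: cube_measure_def insert_absorb prob_space_unit_interval_measure)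
  have fu: "(\<lambda>z. f (?upd z)) \<in> borel_measurable (?U \<Otimes>\<^sub>M ?P')"
    using upd f by (rule measurable_compose)
  have "(\<integral>\<^sup>+w. f w \<partial>cube_measure E) = (\<integral>\<^sup>+w. f w \<partial>distr (?U \<Otimes>\<^sub>M ?P') (cube_measure E) ?upd)"
    by (simp only: distr_upd)
  also have "\<dots> = (\<integral>\<^sup>+z. f (?upd z) \<partial>(?U \<Otimes>\<^sub>M ?P'))"
    by (rule nn_integral_distr[OF upd]) (simp only: distr_upd f)
  also have "\<dots> = (\<integral>\<^sup>+X. (\<integral>\<^sup>+x. f (?upd (x, X)) \<partial>?U) \<partial>?P')"
    by (rule UP.nn_integral_snd[OF fu, symmetric])
  finally show "(\<integral>\<^sup>+w. f w \<partial>cube_measure E) = (\<integral>\<^sup>+X. (\<integral>\<^sup>+x. f (X(e := x)) \<partial>?U) \<partial>?P')"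
    by simp
  show "(\<lambda>X. \<integral>\<^sup>+x. f (X(e := x)) \<partial>?U) \<in> borel_measurable ?P'"
    using U.borel_measurable_nn_integral_fst[OF measurable_pair_swap[OF fu]]
    by (simp only: case_prod_conv)
qed

lemma nn_integral_cube_measure_update_affine_le:
  fixes g :: "('e \<Rightarrow> real) \<Rightarrow> ennreal"
  assumes e: "e \<in> E" and p: "0 \<le> p" and c: "0 < c" "p + c \<le> 1"
    and g: "g \<in> borel_measurable (cube_measure E)"
    and gu: "(\<lambda>w. g (w(e := p + c * w e))) \<in> borel_measurable (cube_measure E)"
  shows "(\<integral>\<^sup>+w. g (w(e := p + c * w e)) \<partial>cube_measure E)
           \<le> ennreal (1 / c) * (\<integral>\<^sup>+w. g w \<partial>cube_measure E)"
proof -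
  let ?U = unit_interval_measure and ?P' = "cube_measure (E - {e})"
  have "(\<integral>\<^sup>+w. g (w(e := p + c * w e)) \<partial>cube_measure E)
      = (\<integral>\<^sup>+X. (\<integral>\<^sup>+x. g (X(e := p + c * x)) \<partial>?U) \<partial>?P')"
    using nn_integral_cube_measure_split(1)[OF e gu] by simp
  also have "\<dots> \<le> (\<integral>\<^sup>+X. ennreal (1 / c) * (\<integral>\<^sup>+x. g (X(e := x)) \<partial>?U) \<partial>?P')"
  proof (rule nn_integral_mono)
    fix X assume "X \<in> space ?P'"
    then have "(\<lambda>x. X(e := x)) \<in> measurable ?U (cube_measure E)"
      using measurable_compose[OF measurable_Pair2' measurable_cube_measure_update[OF e]] by simp
    then have "(\<lambda>x. g (X(e := x))) \<in> borel_measurable ?U"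
      using g by (rule measurable_compose)
    then show "(\<integral>\<^sup>+x. g (X(e := p + c * x)) \<partial>?U) \<le> ennreal (1 / c) * (\<integral>\<^sup>+x. g (X(e := x)) \<partial>?U)"
      by (rule nn_integral_unit_interval_affine_le[OF _ p c])
  qed
  also have "\<dots> = ennreal (1 / c) * (\<integral>\<^sup>+w. g w \<partial>cube_measure E)"
    using nn_integral_cube_measure_split[OF e g] by (simp add: nn_integral_cmult)
  finally show ?thesis .
qed

definition affine_admissible :: "'e set \<Rightarrow> ('e \<Rightarrow> real) \<Rightarrow> ('e \<Rightarrow> real) \<Rightarrow> bool" where
  "affine_admissible S p c \<longleftrightarrow> (\<forall>i\<in>S. 0 \<le> p i \<and> 0 < c i \<and> p i + c i \<le> 1)"

definition cube_affine ::
    "'e set \<Rightarrow> 'e set \<Rightarrow> ('e \<Rightarrow> real) \<Rightarrow> ('e \<Rightarrow> real) \<Rightarrow> ('e \<Rightarrow> real) \<Rightarrow> ('e \<Rightarrow> real)" where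
  "cube_affine E S p c w = (\<lambda>i\<in>E. if i \<in> S then p i + c i * w i else w i)"

lemma affine_admissible_mem_unit:
  assumes "affine_admissible S p c" "i \<in> S" "x \<in> {0..1}"
  shows "p i + c i * x \<in> {0..1}"
proof -
  have "0 \<le> p i" "0 < c i" "p i + c i \<le> 1"
    using assms(1,2) by (auto simp: affine_admissible_def)
  moreover have "0 \<le> c i * x" "c i * x \<le> c i"
    using calculation assms(3) by (simp_all add: mult_left_le)
  ultimately show ?thesis by (simp only: atLeastAtMost_iff) linarith
qed

lemma measurable_cube_affine:
  assumes "affine_admissible S p c"
  shows "cube_affine E S p c \<in> measurable (cube_measure E) (cube_measure E)"
  unfolding cube_affine_def
proof (rule measurable_into_cube_measure)
  fix w i assume "w \<in> space (cube_measure E)" "i \<in> E"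
  then have "w i \<in> {0..1}"
    by (simp add: space_cube_measure PiE_iff)
  then show "(if i \<in> S then p i + c i * w i else w i) \<in> {0..1}"
    using affine_admissible_mem_unit[OF assms] by simp
qed measurable

lemma cube_affine_insert:
  assumes "e \<in> E" "e \<notin> S"
  shows "cube_affine E (insert e S) p c w = cube_affine E S p c (w(e := p e + c e * w e))"
  using assms by (auto simp: cube_affine_def fun_eq_iff)

lemma nn_integral_cube_affine_le:
  fixes g :: "('e \<Rightarrow> real) \<Rightarrow> ennreal"
  assumes "finite S" "S \<subseteq> E" "affine_admissible S p c"
    and "g \<in> borel_measurable (cube_measure E)"
  shows "(\<integral>\<^sup>+w. g (cube_affine E S p c w) \<partial>cube_measure E)
           \<le> ennreal (\<Prod>i\<in>S. 1 / c i) * (\<integral>\<^sup>+w. g w \<partial>cube_measure E)"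
  using assms
proof (induction S arbitrary: g rule: finite_induct)
  case empty
  have "cube_affine E {} p c w = w" if "w \<in> space (cube_measure E)" for w
    using that by (auto simp: cube_affine_def space_cube_measure PiE_def extensional_def)
  then show ?case
    by (simp cong: nn_integral_cong)
next
  case (insert e S)
  have e: "e \<in> E" and S: "S \<subseteq> E" "affine_admissible S p c"
    using insert.prems by (auto simp: affine_admissible_def)
  have pc: "0 \<le> p e" "0 < c e" "p e + c e \<le> 1"
    using insert.prems by (auto simp: affine_admissible_def)
  have g: "g \<in> borel_measurable (cube_measure E)" by fact
  have gS: "(\<lambda>w. g (cube_affine E S p c w)) \<in> borel_measurable (cube_measure E)"
    using measurable_cube_affine[OF S(2)] g by (rule measurable_compose)
  have "(\<lambda>w. g (cube_affine E (insert e S) p c w)) \<in> borel_measurable (cube_measure E)"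
    using measurable_cube_affine[OF insert.prems(2)] g by (rule measurable_compose)
  then have gSe: "(\<lambda>w. g (cube_affine E S p c (w(e := p e + c e * w e)))) \<in> borel_measurable (cube_measure E)"
    using insert.hyps e by (simp add: cube_affine_insert)
  have "(\<integral>\<^sup>+w. g (cube_affine E (insert e S) p c w) \<partial>cube_measure E)
      = (\<integral>\<^sup>+w. g (cube_affine E S p c (w(e := p e + c e * w e))) \<partial>cube_measure E)"
    using insert.hyps e by (simp add: cube_affine_insert)
  also have "\<dots> \<le> ennreal (1 / c e) * (\<integral>\<^sup>+w. g (cube_affine E S p c w) \<partial>cube_measure E)"
    by (rule nn_integral_cube_measure_update_affine_le[OF e pc gS gSe])
  also have "\<dots> \<le> ennreal (1 / c e) * (ennreal (\<Prod>i\<in>S. 1 / c i) * (\<integral>\<^sup>+w. g w \<partial>cube_measure E))"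
    using insert.IH[OF S g] by (rule mult_left_mono) simp
  also have "\<dots> = ennreal (\<Prod>i\<in>insert e S. 1 / c i) * (\<integral>\<^sup>+w. g w \<partial>cube_measure E)"
  proof -
    have "0 \<le> 1 / c e" "0 \<le> (\<Prod>i\<in>S. 1 / c i)"
      using pc S(2) by (auto simp: affine_admissible_def intro!: prod_nonneg)
    then have "ennreal (1 / c e) * ennreal (\<Prod>i\<in>S. 1 / c i) = ennreal (\<Prod>i\<in>insert e S. 1 / c i)"
      using insert.hyps by (simp add: ennreal_mult[symmetric])
    then show ?thesis
      by (simp only: mult.assoc[symmetric])
  qed
  finally show ?case .
qed

lemma cube_affine_in_box:
  assumes "affine_admissible S p c" "w \<in> space (cube_measure E)" "S \<subseteq> E" "i \<in> S"
  shows "p i \<le> cube_affine E S p c w i \<and> cube_affine E S p c w i \<le> p i + c i"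
proof -
  have "0 \<le> w i" "w i \<le> 1" "0 < c i"
    using assms by (auto simp: space_cube_measure PiE_iff affine_admissible_def)
  then have "0 \<le> c i * w i" "c i * w i \<le> c i"
    by (simp_all add: mult_left_le)
  with assms(3,4) show ?thesis
    by (auto simp: cube_affine_def)
qed

text \<open>Clamping to \<open>[0,1]\<close> makes the inverse a self-map of the cube.\<close>
definition cube_affine_inv ::
    "'e set \<Rightarrow> 'e set \<Rightarrow> ('e \<Rightarrow> real) \<Rightarrow> ('e \<Rightarrow> real) \<Rightarrow> ('e \<Rightarrow> real) \<Rightarrow> ('e \<Rightarrow> real)" where
  "cube_affine_inv E S p c w = (\<lambda>i\<in>E. if i \<in> S then max 0 (min 1 ((w i - p i) / c i)) else w i)"

lemma measurable_cube_affine_inv: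
  "cube_affine_inv E S p c \<in> measurable (cube_measure E) (cube_measure E)"
  unfolding cube_affine_inv_def
proof (rule measurable_into_cube_measure)
  fix w i assume "w \<in> space (cube_measure E)" "i \<in> E"
  then have "w i \<in> {0..1}"
    by (simp add: space_cube_measure PiE_iff)
  then show "(if i \<in> S then max 0 (min 1 ((w i - p i) / c i)) else w i) \<in> {0..1}"
    by simp
qed measurable

lemma cube_affine_inv_cube_affine:
  assumes "affine_admissible S p c" "w \<in> space (cube_measure E)"
  shows "cube_affine_inv E S p c (cube_affine E S p c w) = w"
proof
  fix i
  show "cube_affine_inv E S p c (cube_affine E S p c w) i = w i"
  proof (cases "i \<in> E")
    case True
    then have "0 \<le> w i" "w i \<le> 1" "i \<in> S \<Longrightarrow> 0 < c i"
      using assms by (auto simp: space_cube_measure PiE_iff affine_admissible_def)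
    with True show ?thesis
      by (auto simp: cube_affine_inv_def cube_affine_def)
  next
    case False
    with assms(2) show ?thesis
      by (auto simp: cube_affine_inv_def space_cube_measure PiE_iff extensional_def)
  qed
qed

lemma inj_on_cube_affine:
  assumes "affine_admissible S p c"
  shows "inj_on (cube_affine E S p c) (space (cube_measure E))"
  by (rule inj_on_inverseI[where g = "cube_affine_inv E S p c"])
    (rule cube_affine_inv_cube_affine[OF assms])

lemma cube_affine_cube_affine_inv:
  assumes "affine_admissible S p c" "w \<in> space (cube_measure E)"
    and "\<forall>i\<in>S. p i \<le> w i \<and> w i \<le> p i + c i"
  shows "cube_affine E S p c (cube_affine_inv E S p c w) = w"
proof
  fix i
  show "cube_affine E S p c (cube_affine_inv E S p c w) i = w i"
  proof (cases "i \<in> E \<and> i \<in> S")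
    case True
    then have "0 < c i" "0 \<le> (w i - p i) / c i" "(w i - p i) / c i \<le> 1"
      using assms by (auto simp: affine_admissible_def divide_simps)
    with True show ?thesis
      by (simp add: cube_affine_inv_def cube_affine_def)
  next
    case False
    with assms(2) show ?thesis
      by (auto simp: cube_affine_inv_def cube_affine_def space_cube_measure PiE_iff extensional_def)
  qed
qed

lemma image_cube_affine:
  assumes "affine_admissible S p c" "S \<subseteq> E" "D \<subseteq> space (cube_measure E)"
  shows "cube_affine E S p c ` D =
           {w \<in> space (cube_measure E). (\<forall>i\<in>S. p i \<le> w i \<and> w i \<le> p i + c i) \<and>
              cube_affine_inv E S p c w \<in> D}"
proof (intro equalityI subsetI)
  fix w assume "w \<in> cube_affine E S p c ` D"
  then obtain v where v: "v \<in> D" and w: "w = cube_affine E S p c v" by blast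
  then have v_space: "v \<in> space (cube_measure E)" using assms(3) by blast
  have "w \<in> space (cube_measure E)"
    unfolding w using measurable_space[OF measurable_cube_affine[OF assms(1)] v_space] .
  moreover have "\<forall>i\<in>S. p i \<le> w i \<and> w i \<le> p i + c i"
    unfolding w using cube_affine_in_box[OF assms(1) v_space assms(2)] by blast
  moreover have "cube_affine_inv E S p c w \<in> D"
    unfolding w cube_affine_inv_cube_affine[OF assms(1) v_space] by (rule v)
  ultimately show "w \<in> {w \<in> space (cube_measure E). (\<forall>i\<in>S. p i \<le> w i \<and> w i \<le> p i + c i) \<and>
                     cube_affine_inv E S p c w \<in> D}"
    by blast
next
  fix w assume "w \<in> {w \<in> space (cube_measure E). (\<forall>i\<in>S. p i \<le> w i \<and> w i \<le> p i + c i) \<and>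
                  cube_affine_inv E S p c w \<in> D}"
  then have "w = cube_affine E S p c (cube_affine_inv E S p c w)" "cube_affine_inv E S p c w \<in> D"
    using cube_affine_cube_affine_inv[OF assms(1)] by auto
  then show "w \<in> cube_affine E S p c ` D"
    by (rule image_eqI)
qed

lemma sets_image_cube_affine:
  assumes "affine_admissible S p c" "finite S" "S \<subseteq> E" "D \<in> sets (cube_measure E)"
  shows "cube_affine E S p c ` D \<in> sets (cube_measure E)"
proof -
  note [measurable] = measurable_cube_affine_inv assms(4)
  have "{w \<in> space (cube_measure E). (\<forall>i\<in>S. p i \<le> w i \<and> w i \<le> p i + c i) \<and>
           cube_affine_inv E S p c w \<in> D} \<in> sets (cube_measure E)"
    using assms(2) by measurable
  then show ?thesis
    using image_cube_affine[OF assms(1,3) sets.sets_into_space[OF assms(4)]] by simp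
qed

lemma emeasure_le_image_cube_affine:
  assumes "affine_admissible S p c" "finite S" "S \<subseteq> E" "D \<in> sets (cube_measure E)"
  shows "emeasure (cube_measure E) D
           \<le> ennreal (\<Prod>i\<in>S. 1 / c i) * emeasure (cube_measure E) (cube_affine E S p c ` D)"
proof -
  let ?P = "cube_measure E" and ?T = "cube_affine E S p c"
  have TD: "?T ` D \<in> sets ?P"
    by (rule sets_image_cube_affine[OF assms])
  have "emeasure ?P D = (\<integral>\<^sup>+w. indicator D w \<partial>?P)"
    using assms(4) by simp
  also have "\<dots> = (\<integral>\<^sup>+w. indicator (?T ` D) (?T w) \<partial>?P)"
  proof (rule nn_integral_cong)
    fix w assume "w \<in> space ?P"
    then have "?T w \<in> ?T ` D \<longleftrightarrow> w \<in> D"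
      by (rule inj_on_image_mem_iff[OF inj_on_cube_affine[OF assms(1)] _ sets.sets_into_space[OF assms(4)]])
    then show "indicator D w = indicator (?T ` D) (?T w)"
      by (simp add: indicator_def)
  qed
  also have "\<dots> \<le> ennreal (\<Prod>i\<in>S. 1 / c i) * (\<integral>\<^sup>+w. indicator (?T ` D) w \<partial>?P)"
    by (rule nn_integral_cube_affine_le[OF assms(2,3,1) borel_measurable_indicator[OF TD]])
  also have "\<dots> = ennreal (\<Prod>i\<in>S. 1 / c i) * emeasure ?P (?T ` D)"
    using TD by simp
  finally show ?thesis .
qed

lemma sets_Collect_eq_cube_measure:
  assumes E: "countable E"
    and f: "f \<in> measurable M (cube_measure E)" and g: "g \<in> measurable M (cube_measure E)"
  shows "{x \<in> space M. f x = g x} \<in> sets M"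
proof -
  have ext: "f x \<in> extensional E" "g x \<in> extensional E" if "x \<in> space M" for x
    using measurable_space[OF f that] measurable_space[OF g that]
    by (simp_all add: space_cube_measure PiE_iff)
  have "{x \<in> space M. f x = g x} = {x \<in> space M. \<forall>i\<in>E. f x i = g x i}"
    using ext by (auto intro: extensionalityI)
  also have "\<dots> \<in> sets M"
  proof (rule sets.sets_Collect_countable_All'[OF _ E])
    fix i
    show "{x \<in> space M. f x i = g x i} \<in> sets M"
      by (rule measurable_equality_set)
        (rule measurable_compose[OF _ measurable_cube_component], fact)+
  qed
  finally show ?thesis .
qed

lemma suminf_emeasure_le_bounded_overlap:
  assumes G: "\<And>n. G n \<in> sets M" "\<And>n. G n \<subseteq> B" and B: "B \<in> sets M"
    and overlap: "\<And>w. finite {n. w \<in> G n}" "\<And>w. card {n. w \<in> G n} \<le> N"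
  shows "(\<Sum>n. emeasure M (G n)) \<le> of_nat N * emeasure M B"
proof -
  have "(\<Sum>n. emeasure M (G n)) = (\<Sum>n. \<integral>\<^sup>+w. indicator (G n) w \<partial>M)"
    using G(1) by simp
  also have "\<dots> = (\<integral>\<^sup>+w. (\<Sum>n. indicator (G n) w) \<partial>M)"
    by (rule nn_integral_suminf[symmetric]) (rule borel_measurable_indicator[OF G(1)])
  also have "\<dots> \<le> (\<integral>\<^sup>+w. of_nat N * indicator B w \<partial>M)"
  proof (rule nn_integral_mono)
    fix w
    have "(\<Sum>n. indicator (G n) w :: ennreal) = (\<Sum>n\<in>{n. w \<in> G n}. 1)"
      by (subst suminf_finite[OF overlap(1)[of w]]) auto
    also have "\<dots> = of_nat (card {n. w \<in> G n})"
      by simp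
    also have "\<dots> \<le> of_nat N * indicator B w"
    proof (cases "w \<in> B")
      case True
      then show ?thesis using overlap(2)[of w] by simp
    next
      case False
      then have "{n. w \<in> G n} = {}" using G(2) by blast
      then show ?thesis by simp
    qed
    finally show "(\<Sum>n. indicator (G n) w) \<le> of_nat N * (indicator B w :: ennreal)" .
  qed
  also have "\<dots> = of_nat N * emeasure M B"
    using B by (rule nn_integral_cmult_indicator)
  finally show ?thesis .
qed

lemma card_images_containing_le:
  assumes disj: "disjoint_family D" and D: "\<And>n. D n \<subseteq> A" and fibre: "finite {v \<in> A. f v = y}"
  shows "finite {n. y \<in> f ` D n}" "card {n. y \<in> f ` D n} \<le> card {v \<in> A. f v = y}"
proof -
  let ?I = "{n. y \<in> f ` D n}"
  have "\<forall>n\<in>?I. \<exists>v. v \<in> D n \<and> f v = y"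
    by blast
  then obtain v where v: "\<And>n. n \<in> ?I \<Longrightarrow> v n \<in> D n \<and> f (v n) = y"
    by (metis bchoice)
  have inj: "inj_on v ?I"
  proof (rule inj_onI)
    fix n m assume "n \<in> ?I" "m \<in> ?I" "v n = v m"
    with v have "D n \<inter> D m \<noteq> {}"
      by (metis disjoint_iff)
    with disj show "n = m"
      by (auto simp: disjoint_family_on_def)
  qed
  have sub: "v ` ?I \<subseteq> {v \<in> A. f v = y}"
    using v D by blast
  show "finite ?I"
    using finite_subset[OF sub fibre] inj by (simp add: finite_image_iff)
  show "card ?I \<le> card {v \<in> A. f v = y}"
    using inj sub fibre by (rule card_inj_on_le)
qed

lemma emeasure_le_piecewise_cube_affine:
  fixes D :: "nat \<Rightarrow> ('e \<Rightarrow> real) set"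
  assumes D: "\<And>n. D n \<in> sets (cube_measure E)" "disjoint_family D" and A: "A = (\<Union>n. D n)"
    and S: "\<And>n. finite (S n)" "\<And>n. S n \<subseteq> E"
    and pc: "\<And>n. affine_admissible (S n) (p n) (c n)"
    and K: "\<And>n. (\<Prod>i\<in>S n. 1 / c n i) \<le> K"
    and \<Phi>: "\<And>n w. w \<in> D n \<Longrightarrow> \<Phi> w = cube_affine E (S n) (p n) (c n) w"
    and B: "B \<in> sets (cube_measure E)" "\<Phi> ` A \<subseteq> B"
    and fibre: "\<And>w. finite {v \<in> A. \<Phi> v = w}" "\<And>w. card {v \<in> A. \<Phi> v = w} \<le> N"
  shows "emeasure (cube_measure E) A \<le> ennreal K * of_nat N * emeasure (cube_measure E) B"
proof -
  let ?P = "cube_measure E" and ?T = "\<lambda>n. cube_affine E (S n) (p n) (c n)"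
  have image_eq: "?T n ` D n = \<Phi> ` D n" for n
    by (rule image_cong[OF refl]) (rule \<Phi>[symmetric])
  have D_A: "D n \<subseteq> A" for n
    using A by blast
  have images: "\<Phi> ` D n \<in> sets ?P" "\<Phi> ` D n \<subseteq> B" for n
  proof -
    show "\<Phi> ` D n \<in> sets ?P"
      using sets_image_cube_affine[OF pc S D(1), of n n] by (simp only: image_eq)
    show "\<Phi> ` D n \<subseteq> B"
      using D_A B(2) by blast
  qed
  have overlap: "finite {n. w \<in> \<Phi> ` D n}" "card {n. w \<in> \<Phi> ` D n} \<le> N" for w
    using card_images_containing_le[OF D(2) D_A fibre(1)] le_trans[OF _ fibre(2)] by blast+
  have "emeasure ?P A = (\<Sum>n. emeasure ?P (D n))"
    unfolding A using D by (intro suminf_emeasure[symmetric]) auto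
  also have "\<dots> \<le> (\<Sum>n. ennreal K * emeasure ?P (\<Phi> ` D n))"
  proof (intro suminf_le summableI)
    fix n
    have "emeasure ?P (D n) \<le> ennreal (\<Prod>i\<in>S n. 1 / c n i) * emeasure ?P (\<Phi> ` D n)"
      unfolding image_eq[symmetric] by (rule emeasure_le_image_cube_affine[OF pc S D(1)])
    also have "\<dots> \<le> ennreal K * emeasure ?P (\<Phi> ` D n)"
      using K by (intro mult_right_mono ennreal_leI) auto
    finally show "emeasure ?P (D n) \<le> ennreal K * emeasure ?P (\<Phi> ` D n)" .
  qed
  also have "\<dots> = ennreal K * (\<Sum>n. emeasure ?P (\<Phi> ` D n))"
    by simp
  also have "\<dots> \<le> ennreal K * (of_nat N * emeasure ?P B)"
    by (intro mult_left_mono suminf_emeasure_le_bounded_overlap[OF images B(1) overlap]) simp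
  finally show ?thesis
    by (simp add: mult.assoc)
qed

lemma emeasure_le_countably_piecewise_cube_affine:
  assumes E: "countable E" and K: "countable K" "K \<noteq> {}"
    and A: "A \<in> sets (cube_measure E)"
    and \<Phi>: "\<Phi> \<in> measurable (restrict_space (cube_measure E) A) (cube_measure E)"
    and S: "\<And>k. k \<in> K \<Longrightarrow> finite (S k)" "\<And>k. k \<in> K \<Longrightarrow> S k \<subseteq> E"
    and pc: "\<And>k. k \<in> K \<Longrightarrow> affine_admissible (S k) (p k) (c k)"
    and M: "\<And>k. k \<in> K \<Longrightarrow> (\<Prod>i\<in>S k. 1 / c k i) \<le> M"
    and cover: "\<And>w. w \<in> A \<Longrightarrow> \<exists>k\<in>K. \<Phi> w = cube_affine E (S k) (p k) (c k) w"
    and B: "B \<in> sets (cube_measure E)" "\<Phi> ` A \<subseteq> B"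
    and fibre: "\<And>w. finite {v \<in> A. \<Phi> v = w}" "\<And>w. card {v \<in> A. \<Phi> v = w} \<le> N"
  shows "emeasure (cube_measure E) A \<le> ennreal M * of_nat N * emeasure (cube_measure E) B"
proof -
  let ?P = "cube_measure E" and ?T = "\<lambda>k. cube_affine E (S k) (p k) (c k)"
  define k where "k n = from_nat_into K n" for n
  define C where "C n = {w \<in> A. \<Phi> w = ?T (k n) w}" for n
  have k: "k n \<in> K" for n
    unfolding k_def using K(2) by (rule from_nat_into)
  have C: "C n \<in> sets ?P" for n
  proof -
    have "?T (k n) \<in> measurable (restrict_space ?P A) ?P"
      using measurable_cube_affine[OF pc[OF k]] by (rule measurable_restrict_space1)
    from sets_Collect_eq_cube_measure[OF E \<Phi> this]
    have "C n \<in> sets (restrict_space ?P A)"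
      using sets.sets_into_space[OF A] by (simp add: C_def space_restrict_space Int_absorb2)
    then show ?thesis
      using A by (simp add: sets_restrict_space_iff)
  qed
  have "A = (\<Union>n. C n)"
  proof (intro equalityI subsetI)
    fix w assume "w \<in> A"
    with cover obtain j where "j \<in> K" "\<Phi> w = ?T j w" by blast
    moreover obtain n where "j = k n"
      using \<open>j \<in> K\<close> range_from_nat_into[OF K(2,1)] unfolding k_def by (metis rangeE)
    ultimately show "w \<in> (\<Union>n. C n)"
      using \<open>w \<in> A\<close> by (auto simp: C_def)
  qed (auto simp: C_def)
  then have cover_disjointed: "A = (\<Union>n. disjointed C n)"
    by (simp add: UN_disjointed_eq)
  have "range C \<subseteq> sets ?P"
    using C by blast
  then have "disjointed C n \<in> sets ?P" for n
    using sets.range_disjointed_sets by blast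
  moreover have "\<Phi> w = ?T (k n) w" if "w \<in> disjointed C n" for n w
    using that disjointed_subset[of C n] by (auto simp: C_def)
  ultimately show ?thesis
    by (rule emeasure_le_piecewise_cube_affine[where S = "\<lambda>n. S (k n)" and p = "\<lambda>n. p (k n)"
          and c = "\<lambda>n. c (k n)", OF _ disjoint_family_disjointed cover_disjointed
          S[OF k] pc[OF k] M[OF k] _ B fibre])
qed

lemma finite_card_le_two_valued_extensional:
  assumes V: "V \<subseteq> extensional E" "finite S"
    and coords: "\<And>v. v \<in> V \<Longrightarrow> (\<forall>e\<in>E - S. v e = w e) \<and> (\<forall>e\<in>S. v e = x e \<or> v e = y e)"
  shows "finite V" "card V \<le> 2 ^ card S"
proof -
  define pattern where "pattern v = {e \<in> S. v e = x e}" for v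
  have "inj_on pattern V"
  proof (rule inj_onI)
    fix v v' assume v: "v \<in> V" "v' \<in> V" and eq: "pattern v = pattern v'"
    show "v = v'"
    proof (rule extensionalityI[of _ E])
      fix e assume "e \<in> E"
      show "v e = v' e"
      proof (cases "e \<in> S")
        case True
        from eq have "e \<in> pattern v \<longleftrightarrow> e \<in> pattern v'"
          by simp
        then have "v e = x e \<longleftrightarrow> v' e = x e"
          using True by (simp add: pattern_def)
        moreover have "v e = x e \<or> v e = y e" "v' e = x e \<or> v' e = y e"
          using coords[OF v(1)] coords[OF v(2)] True by blast+
        ultimately show ?thesis
          by auto
      next
        case False
        with \<open>e \<in> E\<close> have "e \<in> E - S" by blast
        with coords[OF v(1)] coords[OF v(2)] show ?thesis by simp
      qed
    qed (use V v in blast)+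
  qed
  moreover have "pattern ` V \<subseteq> Pow S"
    by (auto simp: pattern_def)
  ultimately show "finite V" "card V \<le> 2 ^ card S"
    using V(2) card_inj_on_le[of pattern V "Pow S"] inj_on_finite[of pattern V "Pow S"]
    by (simp_all add: card_Pow)
qed

definition branch_params :: "'e set \<Rightarrow> nat \<Rightarrow> ('e set \<times> 'e set) set" where
  "branch_params E s = {(S, L). S \<subseteq> E \<and> finite S \<and> card S \<le> s \<and> L \<subseteq> S}"

text \<open>On \<open>L\<close> the branch reads \<open>\<omega>' = a \<omega>\<close>, on \<open>S - L\<close> it reads \<open>\<omega>' = b + (1 - b) \<omega>\<close>.\<close>
definition branch_offset :: "real \<Rightarrow> 'e set \<Rightarrow> 'e \<Rightarrow> real" where
  "branch_offset b L i = (if i \<in> L then 0 else b)"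

definition branch_scale :: "real \<Rightarrow> real \<Rightarrow> 'e set \<Rightarrow> 'e \<Rightarrow> real" where
  "branch_scale a b L i = (if i \<in> L then a else 1 - b)"

lemma countable_branch_params:
  assumes "countable E"
  shows "countable (branch_params E s)"
proof (rule countable_subset)
  show "branch_params E s \<subseteq> {S. finite S \<and> S \<subseteq> E} \<times> {S. finite S \<and> S \<subseteq> E}"
    by (auto simp: branch_params_def intro: finite_subset)
  show "countable ({S. finite S \<and> S \<subseteq> E} \<times> {S. finite S \<and> S \<subseteq> E})"
    using countable_Collect_finite_subset[OF assms] by blast
qed

lemma affine_admissible_branch:
  assumes "0 < a" "a \<le> 1" "0 \<le> b" "b < 1"
  shows "affine_admissible S (branch_offset b L) (branch_scale a b L)"
  using assms by (simp add: affine_admissible_def branch_offset_def branch_scale_def)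

lemma prod_inverse_branch_scale_le:
  assumes "card S \<le> s" "0 < a" "0 < b" "b < 1"
  shows "(\<Prod>i\<in>S. 1 / branch_scale a b L i) \<le> (1 / min a (1 - b)) ^ s"
proof (rule prod_le_power)
  show "1 \<le> 1 / min a (1 - b)"
    using assms by (simp add: min_def)
  fix i
  show "0 \<le> 1 / branch_scale a b L i \<and> 1 / branch_scale a b L i \<le> 1 / min a (1 - b)"
    using assms by (auto simp: branch_scale_def frac_le)
qed fact

lemma cube_affine_branch:
  assumes "w \<in> extensional E" "w' \<in> extensional E" "L \<subseteq> S" "a \<noteq> 0" "b \<noteq> 1"
    and "\<forall>e\<in>E - S. w e = w' e" "\<forall>e\<in>L. w e = w' e / a" "\<forall>e\<in>S - L. w e = (w' e - b) / (1 - b)"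
  shows "w' = cube_affine E S (branch_offset b L) (branch_scale a b L) w"
proof (rule extensionalityI[OF assms(2)])
  fix e assume "e \<in> E"
  with assms(3-) show "w' e = cube_affine E S (branch_offset b L) (branch_scale a b L) w e"
    by (auto simp: cube_affine_def branch_offset_def branch_scale_def field_simps)
qed (simp add: cube_affine_def)

definition fibres_within_branches ::
    "'e set \<Rightarrow> real \<Rightarrow> real \<Rightarrow> nat \<Rightarrow> ('e \<Rightarrow> real) set \<Rightarrow> (('e \<Rightarrow> real) \<Rightarrow> ('e \<Rightarrow> real)) \<Rightarrow> bool" where
  "fibres_within_branches E a b s A \<Phi> \<longleftrightarrow>
     (\<forall>\<omega>'\<in>\<Phi> ` A. \<exists>S. S \<subseteq> E \<and> finite S \<and> card S \<le> s \<and>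
        (\<forall>\<omega>\<in>A. \<Phi> \<omega> = \<omega>' \<longrightarrow> (\<forall>e\<in>E - S. \<omega> e = \<omega>' e) \<and>
           (\<exists>L\<subseteq>S. (\<forall>e\<in>L. \<omega> e = \<omega>' e / a) \<and> (\<forall>e\<in>S - L. \<omega> e = (\<omega>' e - b) / (1 - b)))))"

lemma fibres_within_branchesD:
  assumes "fibres_within_branches E a b s A \<Phi>" "v \<in> A"
  obtains S where "S \<subseteq> E" "finite S" "card S \<le> s"
    and "\<forall>u\<in>A. \<Phi> u = \<Phi> v \<longrightarrow> (\<forall>e\<in>E - S. u e = \<Phi> v e) \<and>
           (\<exists>L\<subseteq>S. (\<forall>e\<in>L. u e = \<Phi> v e / a) \<and> (\<forall>e\<in>S - L. u e = (\<Phi> v e - b) / (1 - b)))"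
  using bspec[OF assms(1)[unfolded fibres_within_branches_def] imageI[OF assms(2)]] that by blast

lemma card_fibre_le:
  assumes "fibres_within_branches E a b s A \<Phi>" "A \<subseteq> space (cube_measure E)"
  shows "finite {v \<in> A. \<Phi> v = w}" "card {v \<in> A. \<Phi> v = w} \<le> 2 ^ s"
proof -
  let ?F = "{v \<in> A. \<Phi> v = w}"
  have "finite ?F \<and> card ?F \<le> 2 ^ s"
  proof (cases "?F = {}")
    case True
    then show ?thesis
      by (simp only: finite.emptyI card.empty zero_le simp_thms)
  next
    case False
    then obtain v where v: "v \<in> A" "\<Phi> v = w" by blast
    obtain S where S: "finite S" "card S \<le> s" and branch: "\<forall>u\<in>A. \<Phi> u = w \<longrightarrow>
        (\<forall>e\<in>E - S. u e = w e) \<and> (\<exists>L\<subseteq>S. (\<forall>e\<in>L. u e = w e / a) \<and> (\<forall>e\<in>S - L. u e = (w e - b) / (1 - b)))"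
      using fibres_within_branchesD[OF assms(1) v(1)] unfolding v(2) .
    have ext: "?F \<subseteq> extensional E"
      using assms(2) by (auto simp: space_cube_measure PiE_def)
    have coords: "\<And>u. u \<in> ?F \<Longrightarrow>
        (\<forall>e\<in>E - S. u e = w e) \<and> (\<forall>e\<in>S. u e = w e / a \<or> u e = (w e - b) / (1 - b))"
      using branch by auto
    have "finite ?F" "card ?F \<le> 2 ^ card S"
      using finite_card_le_two_valued_extensional[OF ext S(1) coords] by simp_all
    moreover have "2 ^ card S \<le> (2::nat) ^ s"
      using S(2) by (rule power_increasing) simp
    ultimately show ?thesis
      using le_trans by blast
  qed
  then show "finite ?F" "card ?F \<le> 2 ^ s"
    by simp_all
qed

lemma ex_branch_params_cube_affine:
  assumes "fibres_within_branches E a b s A \<Phi>" "w \<in> A" "a \<noteq> 0" "b \<noteq> 1"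
    and "w \<in> extensional E" "\<Phi> w \<in> extensional E"
  shows "\<exists>k\<in>branch_params E s.
           \<Phi> w = cube_affine E (fst k) (branch_offset b (snd k)) (branch_scale a b (snd k)) w"
proof -
  obtain S where S: "S \<subseteq> E" "finite S" "card S \<le> s" and branch:
      "\<forall>u\<in>A. \<Phi> u = \<Phi> w \<longrightarrow> (\<forall>e\<in>E - S. u e = \<Phi> w e) \<and>
         (\<exists>L\<subseteq>S. (\<forall>e\<in>L. u e = \<Phi> w e / a) \<and> (\<forall>e\<in>S - L. u e = (\<Phi> w e - b) / (1 - b)))"
    by (rule fibres_within_branchesD[OF assms(1,2)])
  from bspec[OF branch assms(2)] obtain L where L: "L \<subseteq> S"
      "\<forall>e\<in>L. w e = \<Phi> w e / a" "\<forall>e\<in>S - L. w e = (\<Phi> w e - b) / (1 - b)"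
    and off: "\<forall>e\<in>E - S. w e = \<Phi> w e"
    by blast
  have "\<Phi> w = cube_affine E S (branch_offset b L) (branch_scale a b L) w"
    using cube_affine_branch[OF assms(5,6) L(1) assms(3,4) off L(2,3)] .
  moreover have "(S, L) \<in> branch_params E s"
    using S L(1) by (simp add: branch_params_def)
  ultimately show ?thesis
    by (intro bexI[of _ "(S, L)"]) simp_all
qed

lemma emeasure_le_branch_map:
  assumes E: "countable E" and A: "A \<in> sets (cube_measure E)" and B: "B \<in> sets (cube_measure E)"
    and ab: "0 < a" "a < 1" "0 < b" "b < 1"
    and \<Phi>: "\<Phi> ` A \<subseteq> B" "\<Phi> \<in> measurable (restrict_space (cube_measure E) A) (cube_measure E)"
    and branches: "fibres_within_branches E a b s A \<Phi>"
  shows "emeasure (cube_measure E) A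
           \<le> ennreal ((1 / min a (1 - b)) ^ s) * of_nat (2 ^ s) * emeasure (cube_measure E) B"
proof -
  have A_space: "A \<subseteq> space (cube_measure E)" and B_space: "B \<subseteq> space (cube_measure E)"
    using A B by (simp_all add: sets.sets_into_space)
  have cover: "\<exists>k\<in>branch_params E s.
      \<Phi> w = cube_affine E (fst k) (branch_offset b (snd k)) (branch_scale a b (snd k)) w"
    if "w \<in> A" for w
  proof -
    have "w \<in> extensional E" "\<Phi> w \<in> extensional E"
      using that A_space B_space \<Phi>(1) unfolding space_cube_measure PiE_def by blast+
    with ab show ?thesis
      by (intro ex_branch_params_cube_affine[OF branches that]) simp_all
  qed
  have "({}, {}) \<in> branch_params E s"
    by (simp add: branch_params_def)
  then have K: "countable (branch_params E s)" "branch_params E s \<noteq> {}"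
    using countable_branch_params[OF E] by blast+
  have params: "finite (fst k)" "fst k \<subseteq> E"
      "affine_admissible (fst k) (branch_offset b (snd k)) (branch_scale a b (snd k))"
      "(\<Prod>i\<in>fst k. 1 / branch_scale a b (snd k) i) \<le> (1 / min a (1 - b)) ^ s"
    if "k \<in> branch_params E s" for k
    using that ab
    by (auto simp: branch_params_def intro!: affine_admissible_branch prod_inverse_branch_scale_le)
  show ?thesis
    by (rule emeasure_le_countably_piecewise_cube_affine[where S = fst
          and p = "\<lambda>k. branch_offset b (snd k)" and c = "\<lambda>k. branch_scale a b (snd k)",
          OF E K A \<Phi>(2) params cover B \<Phi>(1) card_fibre_le[OF branches A_space]])
qed

lemma (in finite_measure) measure_le_mult_of_emeasure_le:
  assumes "emeasure M A \<le> ennreal c * emeasure M B" "0 \<le> c"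
  shows "measure M A \<le> c * measure M B"
  using assms by (simp add: emeasure_eq_measure ennreal_mult[symmetric])

theorem mainTheorem15:
  fixes E :: "'e set" and A B :: "('e \<Rightarrow> real) set" and a b :: real and s :: nat
    and \<Phi> :: "('e \<Rightarrow> real) \<Rightarrow> ('e \<Rightarrow> real)"
  assumes "countable E"
    and "A \<in> sets (cube_measure E)" and "B \<in> sets (cube_measure E)"
    and "0 < a" "a < 1" "0 < b" "b < 1"
    and "\<Phi> ` A \<subseteq> B"
    and "\<Phi> \<in> measurable (restrict_space (cube_measure E) A) (restrict_space (cube_measure E) B)"
    and "\<forall>\<omega>'\<in>\<Phi> ` A. \<exists>S. S \<subseteq> E \<and> finite S \<and> card S \<le> s \<and>
           (\<forall>\<omega>\<in>A. \<Phi> \<omega> = \<omega>' \<longrightarrow>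
              (\<forall>e\<in>E - S. \<omega> e = \<omega>' e) \<and>
              (\<exists>L\<subseteq>S. (\<forall>e\<in>L. \<omega> e = \<omega>' e / a) \<and>
                        (\<forall>e\<in>S - L. \<omega> e = (\<omega>' e - b) / (1 - b))))"
  shows "measure (cube_measure E) A \<le> (2 / min a (1 - b)) ^ s * measure (cube_measure E) B"
proof -
  let ?P = "cube_measure E" and ?m = "min a (1 - b)"
  interpret prob_space ?P
    by (rule prob_space_cube_measure)
  have "fibres_within_branches E a b s A \<Phi>"
    using assms(10) unfolding fibres_within_branches_def .
  then have "emeasure ?P A \<le> ennreal ((1 / ?m) ^ s) * of_nat (2 ^ s) * emeasure ?P B"
    by (rule emeasure_le_branch_map[OF assms(1-8)
          measurable_restrict_space2_iff[THEN iffD1, OF assms(9), THEN conjunct1]])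
  moreover have "0 < ?m"
    using assms(4,7) by simp
  then have "ennreal ((1 / ?m) ^ s) * of_nat (2 ^ s) = ennreal ((1 / ?m) ^ s * 2 ^ s)"
    using ennreal_power[of 2 s] by (simp add: ennreal_mult)
  ultimately have "measure ?P A \<le> (1 / ?m) ^ s * 2 ^ s * measure ?P B"
    using \<open>0 < ?m\<close> by (intro measure_le_mult_of_emeasure_le) simp_all
  then show ?thesis
    by (simp add: power_divide)
qed

end
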